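(* Let $d\ge1$, $\mathcal D$ a dyadic grid in $\mathbb R^d$, $\mathcal Q\subset\mathcal D$, $\tau=\{\tau_Q\}_{Q\in\mathcal Q}$ nonnegative constants, $\sigma,w$ weights, $1<q<\infty$, and $f\ge0$ bounded with compact support. Let $\Omega_k=\{\overline T(f\sigma)>2^k\}$, let $\mathcal Q_k$ be Whitney collections for $\Omega_k$ as in the context, and for $Q\in\mathcal Q_k$ let $E_k(Q)=Q\cap(\Omega_{k+2}\setminus\Omega_{k+3})$. Then for all $k$, all $Q\in\mathcal Q_k$ and all $x\in E_k(Q)$, $$2^k\le \overline T^{\rm in}_{Q^{(1)}}(\mathbf 1_{Q^{(1)}}f\sigma)(x).$$
   Context: $\mathbb E_R(g)=|R|^{-1}\int_R g$. $\overline T(g\sigma)(x)=\big(\sum_{R\in\mathcal Q}|\tau_R\mathbb E_R(g\sigma)\mathbf 1_R(x)|^q\big)^{1/q}$, and for a dyadic cube $P$, $\overline T^{\rm in}_P(g\sigma)(x)=\big(\sum_{R\in\mathcal Q,\ R\subseteq P}|\tau_R\mathbb E_R(g\sigma)\mathbf 1_R(x)|^q\big)^{1/q}$. $Q^{(1)}$ is the dyadic parent of $Q$, $Q^{(j+1)}=(Q^{(j)})^{(1)}$. Whitney collections: for each $k$, $\mathcal Q_k$ is a collection of pairwise disjoint dyadic cubes with $\Omega_k=\bigcup_{Q\in\mathcal Q_k}Q$; $Q^{(1)}\subset\Omega_k$ and $Q^{(2)}\cap\Omega_k^c\neq\emptyset$ for $Q\in\mathcal Q_k$; $\sum_{Q\in\mathcal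 Q_k}\mathbf 1_{Q^{(1)}}\lesssim\mathbf 1_{\Omega_k}$; $\sup_{Q\in\mathcal Q_k}\#\{Q'\in\mathcal Q_k:Q'\cap Q^{(1)}\ne\emptyset\}\lesssim1$; and $Q\in\mathcal Q_k$, $Q'\in\mathcal Q_l$, $Q\subsetneq Q'$ implies $k>l$. *)

theory Defs
  imports "HOL-Analysis.Analysis"
begin

type_synonym 'n pt = "real^'n"

definition hcube :: "'n::finite pt \<Rightarrow> real \<Rightarrow> 'n pt set" where
  "hcube a s = {x. \<forall>i. a $ i \<le> x $ i \<and> x $ i < a $ i + s}"

definition dyadic_grid :: "(int \<Rightarrow> 'n::finite pt set set) \<Rightarrow> bool" where
  "dyadic_grid D \<longleftrightarrow>
     (\<forall>k. (\<forall>Q\<in>D k. \<exists>a. Q = hcube a (2 powr (- real_of_int k)))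
        \<and> (\<forall>x. \<exists>!Q. Q \<in> D k \<and> x \<in> Q))
   \<and> (\<forall>j k Q P. j \<le> k \<longrightarrow> Q \<in> D k \<longrightarrow> P \<in> D j \<longrightarrow> Q \<subseteq> P \<or> Q \<inter> P = {})"

definition grid_cubes :: "(int \<Rightarrow> 'n::finite pt set set) \<Rightarrow> 'n pt set set" where
  "grid_cubes D = (\<Union>k. D k)"

definition parent :: "(int \<Rightarrow> 'n::finite pt set set) \<Rightarrow> 'n pt set \<Rightarrow> 'n pt set" where
  "parent D Q = (THE P. \<exists>k. Q \<in> D k \<and> P \<in> D (k - 1) \<and> Q \<subseteq> P)"

definition weight :: "('n::finite pt \<Rightarrow> real) \<Rightarrow> bool" where
  "weight \<sigma> \<longleftrightarrow> \<sigma> \<in> borel_measurable lborel \<and> (\<forall>x. 0 \<le> \<sigma> x)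
     \<and> (\<forall>K. compact K \<longrightarrow> set_integrable lborel K \<sigma>)
     \<and> (AE x in lborel. 0 < \<sigma> x)"

definition avg :: "('n::finite pt \<Rightarrow> real) \<Rightarrow> ('n pt \<Rightarrow> real) \<Rightarrow> 'n pt set \<Rightarrow> real" where
  "avg \<sigma> g R = (LINT x:R|lborel. g x * \<sigma> x) / measure lborel R"

text \<open>The q-th power of the operator, over the cube family C: the (possibly infinite)
  sum of nonnegative terms, i.e. the supremum of finite partial sums.\<close>
definition Tq :: "'n::finite pt set set \<Rightarrow> ('n pt set \<Rightarrow> real) \<Rightarrow> real \<Rightarrow> ('n pt \<Rightarrow> real)
     \<Rightarrow> ('n pt \<Rightarrow> real) \<Rightarrow> 'n pt \<Rightarrow> ennreal" where
  "Tq C \<tau> q \<sigma> g x = (SUP F\<in>{F. finite F \<and> F \<subseteq> C}.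
      \<Sum>R\<in>F. ennreal (\<bar>\<tau> R * avg \<sigma> g R * indicator R x\<bar> powr q))"

definition ennroot :: "real \<Rightarrow> ennreal \<Rightarrow> ennreal" where
  "ennroot q t = (if t = top then top else ennreal (enn2real t powr (1 / q)))"

definition Tbar :: "'n::finite pt set set \<Rightarrow> ('n pt set \<Rightarrow> real) \<Rightarrow> real \<Rightarrow> ('n pt \<Rightarrow> real)
     \<Rightarrow> ('n pt \<Rightarrow> real) \<Rightarrow> 'n pt \<Rightarrow> ennreal" where
  "Tbar C \<tau> q \<sigma> g x = ennroot q (Tq C \<tau> q \<sigma> g x)"

definition Tin :: "'n::finite pt set set \<Rightarrow> ('n pt set \<Rightarrow> real) \<Rightarrow> real \<Rightarrow> 'n pt set
     \<Rightarrow> ('n pt \<Rightarrow> real) \<Rightarrow> ('n pt \<Rightarrow> real) \<Rightarrow> 'n pt \<Rightarrow> ennreal" where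
  "Tin C \<tau> q P \<sigma> g x = Tbar {R\<in>C. R \<subseteq> P} \<tau> q \<sigma> g x"

definition Omega :: "'n::finite pt set set \<Rightarrow> ('n pt set \<Rightarrow> real) \<Rightarrow> real \<Rightarrow> ('n pt \<Rightarrow> real)
     \<Rightarrow> ('n pt \<Rightarrow> real) \<Rightarrow> int \<Rightarrow> 'n pt set" where
  "Omega C \<tau> q \<sigma> f k = {x. ennreal (2 powr real_of_int k) < Tbar C \<tau> q \<sigma> f x}"

definition whitney :: "(int \<Rightarrow> 'n::finite pt set set) \<Rightarrow> (int \<Rightarrow> 'n pt set)
     \<Rightarrow> (int \<Rightarrow> 'n pt set set) \<Rightarrow> bool" where
  "whitney D Om W \<longleftrightarrow>
     (\<forall>k. W k \<subseteq> grid_cubes D \<and> disjoint (W k) \<and> Om k = \<Union>(W k)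
        \<and> (\<forall>Q\<in>W k. parent D Q \<subseteq> Om k \<and> parent D (parent D Q) \<inter> - Om k \<noteq> {}))
   \<and> (\<exists>C::real. \<forall>k x. finite {Q\<in>W k. x \<in> parent D Q}
        \<and> real (card {Q\<in>W k. x \<in> parent D Q}) \<le> C * indicator (Om k) x)
   \<and> (\<exists>C::real. \<forall>k. \<forall>Q\<in>W k. finite {Q'\<in>W k. Q' \<inter> parent D Q \<noteq> {}}
        \<and> real (card {Q'\<in>W k. Q' \<inter> parent D Q \<noteq> {}}) \<le> C)
   \<and> (\<forall>k l Q Q'. Q \<in> W k \<longrightarrow> Q' \<in> W l \<longrightarrow> Q \<subset> Q' \<longrightarrow> k > l)"

end

theory Submission
  imports Defs
begin

text \<open>Split the sum defining \<open>Tbar(f\<sigma>)(x)\<close> into the cubes inside \<open>P = Q\<^sup>(\<^sup>1\<^sup>)\<close> and the rest.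
  A cube of the family that contains \<open>x \<in> P\<close> but is not inside \<open>P\<close> must contain the
  grandparent \<open>Q\<^sup>(\<^sup>2\<^sup>)\<close>, hence a point \<open>z \<notin> \<Omega>\<^sub>k\<close>; so the rest is at most
  \<open>Tbar(f\<sigma>)(z)\<^sup>q \<le> 2\<^sup>k\<^sup>q\<close>. Since \<open>Tbar(f\<sigma>)(x)\<^sup>q > 4\<^sup>q 2\<^sup>k\<^sup>q \<ge> 4 \<cdot> 2\<^sup>k\<^sup>q\<close>, the part inside \<open>P\<close>
  exceeds \<open>2\<^sup>k\<^sup>q\<close>.\<close>

lemma hcube_side_unique:
  fixes a b :: "'n::finite pt"
  assumes s: "0 < s" and t: "0 < t" and eq: "hcube a s = hcube b t"
  shows "s = t"
proof -
  have "a \<in> hcube b t" "b \<in> hcube a s"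
    using s t eq by (auto simp: hcube_def)
  then have "a = b"
    unfolding hcube_def vec_eq_iff by (simp add: order_antisym)
  then have same: "hcube a s = hcube a t"
    using eq by simp
  have corner: "(\<chi> i. a $ i + r) \<in> hcube a u \<longleftrightarrow> r < u" if "0 \<le> r" for r u
    using that by (simp add: hcube_def)
  have "\<not> s < t"
    using corner[of s s] corner[of s t] s same by simp
  moreover have "\<not> t < s"
    using corner[of t t] corner[of t s] t same by simp
  ultimately show ?thesis
    by linarith
qed

lemma dyadic_grid_cube:
  assumes "dyadic_grid D" "Q \<in> D k"
  obtains a where "Q = hcube a (2 powr (- real_of_int k))"
  using assms unfolding dyadic_grid_def by metis

lemma dyadic_grid_cover:
  assumes "dyadic_grid D"
  obtains Q where "Q \<in> D k" "x \<in> Q"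
  using assms unfolding dyadic_grid_def by metis

lemma dyadic_grid_unique:
  assumes "dyadic_grid D" "Q \<in> D k" "x \<in> Q" "P \<in> D k" "x \<in> P"
  shows "P = Q"
  using assms unfolding dyadic_grid_def by metis

lemma dyadic_grid_nested:
  assumes "dyadic_grid D" "j \<le> k" "Q \<in> D k" "P \<in> D j"
  shows "Q \<subseteq> P \<or> Q \<inter> P = {}"
  using assms unfolding dyadic_grid_def by metis

lemma dyadic_grid_generation_unique:
  assumes g: "dyadic_grid D" and "Q \<in> D k" "Q \<in> D j"
  shows "k = j"
proof -
  obtain a b where "Q = hcube a (2 powr (- real_of_int k))" "Q = hcube b (2 powr (- real_of_int j))"
    using dyadic_grid_cube[OF g] assms by metis
  then have "2 powr (- real_of_int k) = 2 powr (- real_of_int j)"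
    using hcube_side_unique[of "2 powr (- real_of_int k)" "2 powr (- real_of_int j)" a b] by simp
  then show ?thesis
    using powr_inj[of 2] by simp
qed

lemma dyadic_grid_cube_nonempty:
  assumes "dyadic_grid D" "Q \<in> D k"
  shows "Q \<noteq> {}"
proof -
  obtain a where "Q = hcube a (2 powr (- real_of_int k))"
    using dyadic_grid_cube[OF assms] .
  then have "a \<in> Q" by (simp add: hcube_def)
  then show ?thesis by blast
qed

lemma parent_in_dyadic_grid:
  assumes g: "dyadic_grid D" and Q: "Q \<in> D k"
  shows "parent D Q \<in> D (k - 1)" and "Q \<subseteq> parent D Q"
proof -
  obtain a where a: "a \<in> Q"
    using dyadic_grid_cube_nonempty[OF g Q] by blast
  obtain P where P: "P \<in> D (k - 1)" "a \<in> P"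
    using dyadic_grid_cover[OF g] by blast
  have QP: "Q \<subseteq> P"
    using dyadic_grid_nested[OF g _ Q P(1)] a P(2) by auto
  have "parent D Q = P"
    unfolding parent_def
  proof (rule the_equality)
    show "\<exists>k. Q \<in> D k \<and> P \<in> D (k - 1) \<and> Q \<subseteq> P"
      using Q P QP by blast
  next
    fix P' assume "\<exists>k. Q \<in> D k \<and> P' \<in> D (k - 1) \<and> Q \<subseteq> P'"
    then show "P' = P"
      using dyadic_grid_generation_unique[OF g _ Q] dyadic_grid_unique[OF g P] a by blast
  qed
  then show "parent D Q \<in> D (k - 1)" "Q \<subseteq> parent D Q"
    using P QP by simp_all
qed

lemma dyadic_cube_not_within_contains_parent:
  assumes g: "dyadic_grid D" and P: "P \<in> D m" and R: "R \<in> grid_cubes D"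
    and "x \<in> R" "x \<in> P" "\<not> R \<subseteq> P"
  shows "parent D P \<subseteq> R"
proof -
  obtain i where Ri: "R \<in> D i"
    using R unfolding grid_cubes_def by blast
  have "\<not> m \<le> i"
    using dyadic_grid_nested[OF g _ Ri P] assms(4-6) by blast
  then have "parent D P \<subseteq> R \<or> parent D P \<inter> R = {}"
    using dyadic_grid_nested[OF g _ parent_in_dyadic_grid(1)[OF g P] Ri] by simp
  then show ?thesis
    using parent_in_dyadic_grid(2)[OF g P] assms(4,5) by blast
qed

lemma avg_indicator_superset:
  assumes "R \<subseteq> P"
  shows "avg \<sigma> (\<lambda>y. indicator P y * f y) R = avg \<sigma> f R"
proof -
  have "(\<lambda>y. indicator R y *\<^sub>R (indicator P y * f y * \<sigma> y)) = (\<lambda>y. indicator R y *\<^sub>R (f y * \<sigma> y))"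
    using assms by (intro ext) (auto split: split_indicator)
  then show ?thesis
    unfolding avg_def set_lebesgue_integral_def by (simp only:)
qed

lemma Tq_le_Tq_within_plus:
  assumes outside: "\<And>R. R \<in> C \<Longrightarrow> x \<in> R \<Longrightarrow> \<not> R \<subseteq> P \<Longrightarrow> z \<in> R"
  shows "Tq C \<tau> q \<sigma> f x
    \<le> Tq {R\<in>C. R \<subseteq> P} \<tau> q \<sigma> (\<lambda>y. indicator P y * f y) x + Tq C \<tau> q \<sigma> f z"
  unfolding Tq_def
proof (rule SUP_least)
  define t where "t h y R = ennreal (\<bar>\<tau> R * avg \<sigma> h R * indicator R y\<bar> powr q)" for h y R
  define g where "g = (\<lambda>y. indicator P y * f y)"
  fix F assume F: "F \<in> {F. finite F \<and> F \<subseteq> C}"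
  have term_le: "t f x R \<le> (if R \<subseteq> P then t g x R else 0) + t f z R" if "R \<in> F" for R
  proof (cases "R \<subseteq> P")
    case True
    then show ?thesis
      using avg_indicator_superset[OF True] by (simp add: t_def g_def)
  next
    case False
    then show ?thesis
      using that F outside[of R] by (cases "x \<in> R") (auto simp: t_def)
  qed
  have "(\<Sum>R\<in>F. t f x R) \<le> (\<Sum>R\<in>F. (if R \<subseteq> P then t g x R else 0)) + (\<Sum>R\<in>F. t f z R)"
    unfolding sum.distrib[symmetric] by (rule sum_mono) (rule term_le)
  also have "(\<Sum>R\<in>F. (if R \<subseteq> P then t g x R else 0)) = (\<Sum>R\<in>{R\<in>F. R \<subseteq> P}. t g x R)"
    using F by (simp add: sum.inter_filter)
  also have "\<dots> \<le> (SUP F\<in>{F. finite F \<and> F \<subseteq> {R\<in>C. R \<subseteq> P}}. \<Sum>R\<in>F. t g x R)"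
    by (rule SUP_upper) (use F in auto)
  also have "(\<Sum>R\<in>F. t f z R) \<le> (SUP F\<in>{F. finite F \<and> F \<subseteq> C}. \<Sum>R\<in>F. t f z R)"
    by (rule SUP_upper) (use F in auto)
  finally show "(\<Sum>R\<in>F. t f x R) \<le> (SUP F\<in>{F. finite F \<and> F \<subseteq> {R\<in>C. R \<subseteq> P}}. \<Sum>R\<in>F. t g x R)
      + (SUP F\<in>{F. finite F \<and> F \<subseteq> C}. \<Sum>R\<in>F. t f z R)"
    by (simp add: add_mono)
qed

lemma powr_inverse_ge_of_split:
  fixes a b c u q :: real
  assumes q: "1 \<le> q" and u: "0 < u" and a0: "0 \<le> a" and c0: "0 \<le> c" and abc: "a \<le> b + c"
    and a: "4 * u < a powr (1/q)" and c: "c powr (1/q) \<le> u"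
  shows "u \<le> b powr (1/q)"
proof -
  have "(4 * u) powr q < (a powr (1/q)) powr q"
    using a u q by (intro powr_less_mono2) auto
  then have "(4 * u) powr q < a"
    using a0 q by (simp add: powr_powr)
  moreover have "4 * u powr q \<le> (4 * u) powr q"
    using powr_mono[of 1 q 4] q u by (simp add: powr_mult)
  moreover have "c \<le> u powr q"
    using powr_mono2[OF _ _ c, of q] q c0 by (simp add: powr_powr)
  ultimately have "u powr q \<le> b"
    using abc powr_ge_zero[of u q] by linarith
  then have "(u powr q) powr (1/q) \<le> b powr (1/q)"
    using q by (intro powr_mono2) auto
  then show ?thesis
    using q u by (simp add: powr_powr)
qed

lemma ennroot_ge_of_split:
  assumes q: "1 \<le> q" and u: "0 < u" and ABZ: "A \<le> B + Z"
    and A: "ennreal (4 * u) < ennroot q A" and Z: "ennroot q Z \<le> ennreal u"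
  shows "ennreal u \<le> ennroot q B"
proof (cases "B = top")
  case False
  have Z_fin: "Z \<noteq> top"
    using Z by (auto simp: ennroot_def top_unique)
  then have A_fin: "A \<noteq> top"
    using ABZ False by (auto simp: top_unique)
  have "enn2real A \<le> enn2real B + enn2real Z"
    using ABZ False Z_fin by (metis enn2real_mono enn2real_plus ennreal_add_eq_top top.not_eq_extremum)
  moreover have "4 * u < enn2real A powr (1/q)"
    using A A_fin u by (simp add: ennroot_def ennreal_less_iff)
  moreover have "enn2real Z powr (1/q) \<le> u"
    using Z Z_fin u by (simp add: ennroot_def ennreal_le_iff)
  ultimately have "u \<le> enn2real B powr (1/q)"
    by (intro powr_inverse_ge_of_split[OF q u enn2real_nonneg enn2real_nonneg])
  then show ?thesis
    using False by (simp add: ennroot_def ennreal_leI)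
qed (simp add: ennroot_def)

lemma whitney_level:
  assumes "whitney D Om W"
  shows "W k \<subseteq> grid_cubes D"
    and "\<forall>Q\<in>W k. parent D Q \<subseteq> Om k \<and> parent D (parent D Q) \<inter> - Om k \<noteq> {}"
proof -
  have "\<forall>k. W k \<subseteq> grid_cubes D \<and> disjoint (W k) \<and> Om k = \<Union>(W k)
      \<and> (\<forall>Q\<in>W k. parent D Q \<subseteq> Om k \<and> parent D (parent D Q) \<inter> - Om k \<noteq> {})"
    using assms unfolding whitney_def by (rule conjunct1)
  then have "W k \<subseteq> grid_cubes D \<and> disjoint (W k) \<and> Om k = \<Union>(W k)
      \<and> (\<forall>Q\<in>W k. parent D Q \<subseteq> Om k \<and> parent D (parent D Q) \<inter> - Om k \<noteq> {})"
    by (rule spec)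
  then show "W k \<subseteq> grid_cubes D"
    and "\<forall>Q\<in>W k. parent D Q \<subseteq> Om k \<and> parent D (parent D Q) \<inter> - Om k \<noteq> {}"
    by blast+
qed

lemma whitney_cube_in_grid:
  assumes "whitney D Om W" "Q \<in> W k"
  shows "Q \<in> grid_cubes D"
  using whitney_level(1)[OF assms(1)] assms(2) by blast

lemma whitney_grandparent_meets_complement:
  assumes "whitney D Om W" "Q \<in> W k"
  obtains z where "z \<in> parent D (parent D Q)" "z \<notin> Om k"
  using whitney_level(2)[OF assms(1)] assms(2) by blast

theorem lemma3p5:
  fixes D :: "int \<Rightarrow> (real^'n::finite) set set"
    and Qc :: "(real^'n) set set"
    and \<tau> :: "(real^'n) set \<Rightarrow> real"
    and \<sigma> w f :: "real^'n \<Rightarrow> real"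
    and q :: real
    and W :: "int \<Rightarrow> (real^'n) set set"
  assumes grid: "dyadic_grid D"
    and Qc: "Qc \<subseteq> grid_cubes D"
    and tau: "\<forall>R\<in>Qc. 0 \<le> \<tau> R"
    and sigma: "weight \<sigma>" and w: "weight w"
    and q: "1 < q"
    and f_meas: "f \<in> borel_measurable lborel"
    and f_nonneg: "\<forall>x. 0 \<le> f x"
    and f_bdd: "bounded (range f)"
    and f_supp: "\<exists>K. compact K \<and> (\<forall>x. x \<notin> K \<longrightarrow> f x = 0)"
    and W: "whitney D (Omega Qc \<tau> q \<sigma> f) W"
  shows "\<forall>k. \<forall>Q\<in>W k. \<forall>x\<in>Q \<inter> (Omega Qc \<tau> q \<sigma> f (k + 2) - Omega Qc \<tau> q \<sigma> f (k + 3)).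
           ennreal (2 powr real_of_int k)
             \<le> Tin Qc \<tau> q (parent D Q) \<sigma> (\<lambda>y. indicator (parent D Q) y * f y) x"
proof (intro allI ballI)
  fix k Q x
  assume QW: "Q \<in> W k" and x: "x \<in> Q \<inter> (Omega Qc \<tau> q \<sigma> f (k + 2) - Omega Qc \<tau> q \<sigma> f (k + 3))"
  define P where "P = parent D Q"
  obtain j where Qj: "Q \<in> D j"
    using whitney_cube_in_grid[OF W QW] unfolding grid_cubes_def by blast
  have P: "P \<in> D (j - 1)" "x \<in> P"
    using parent_in_dyadic_grid[OF grid Qj] x unfolding P_def by auto
  obtain z where z: "z \<in> parent D P" "z \<notin> Omega Qc \<tau> q \<sigma> f k"
    using whitney_grandparent_meets_complement[OF W QW] unfolding P_def .
  have "z \<in> R" if "R \<in> Qc" "x \<in> R" "\<not> R \<subseteq> P" for R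
    using dyadic_cube_not_within_contains_parent[OF grid P(1) _ that(2) P(2) that(3)] Qc that(1) z(1)
    by blast
  then have split: "Tq Qc \<tau> q \<sigma> f x
      \<le> Tq {R\<in>Qc. R \<subseteq> P} \<tau> q \<sigma> (\<lambda>y. indicator P y * f y) x + Tq Qc \<tau> q \<sigma> f z"
    by (rule Tq_le_Tq_within_plus)
  have "ennreal (2 powr real_of_int k * 4) < ennroot q (Tq Qc \<tau> q \<sigma> f x)"
    using x by (simp add: Omega_def Tbar_def powr_add)
  then have large: "ennreal (4 * 2 powr real_of_int k) < ennroot q (Tq Qc \<tau> q \<sigma> f x)"
    by (simp only: mult.commute)
  have small: "ennroot q (Tq Qc \<tau> q \<sigma> f z) \<le> ennreal (2 powr real_of_int k)"
    using z(2) by (simp add: Omega_def Tbar_def not_less)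
  have "ennreal (2 powr real_of_int k)
      \<le> ennroot q (Tq {R\<in>Qc. R \<subseteq> P} \<tau> q \<sigma> (\<lambda>y. indicator P y * f y) x)"
    using q by (intro ennroot_ge_of_split[OF _ _ split large small]) simp_all
  then show "ennreal (2 powr real_of_int k)
      \<le> Tin Qc \<tau> q (parent D Q) \<sigma> (\<lambda>y. indicator (parent D Q) y * f y) x"
    unfolding Tin_def Tbar_def P_def .
qed

end
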